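(* Let $\gamma>0$ and, for $n\in\mathbb{N}$, let $D_n=\operatorname{diag}(1,2,\dots,n)\in\mathbb{R}^{n\times n}$ and \[ \mathcal{W}_n=\begin{pmatrix} 0 & D_n & 0\\ -D_n & 0 & \gamma D_n\\ 0 & -\gamma D_n & -D_n^2\end{pmatrix}\in\mathbb{R}^{3n\times 3n}, \] acting on $\mathcal{H}_n=\mathbb{C}^{3n}$ with the Euclidean norm, and let $T_n(t)=e^{t\mathcal{W}_n}$. Then the semigroups $T_n(\cdot)$ are uniformly polynomially stable of order $\alpha=2$: there exists a constant $M>0$, independent of $n$, such that \[ \big\|T_n(t)\mathcal{W}_n^{-1}\big\|_{\mathcal{L}(\mathcal{H}_n)}\le \frac{M}{t^{1/2}}\qquad\text{for all } t>0 \text{ and all } n\in\mathbb{N}. \]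
   Context: $\mathcal{W}_n$ is the matrix obtained in the paper from a modal approximation of the weakly coupled thermoelastic system under Dirichlet (displacement)–Neumann (temperature) boundary conditions. Each $\mathcal{W}_n$ is invertible and generates a contraction semigroup, since $\operatorname{Re}(\mathcal{W}_n y,y)=-\|D_n\theta\|^2\le 0$ for $y=(u,v,\theta)$. *)

theory Defs
  imports "Jordan_Normal_Form.Gauss_Jordan_Elimination"
begin

text \<open>The matrix W_n (size 3n x 3n), written entrywise in 3x3 block form with
  n x n blocks; the diagonal block entries of D_n are 1,...,n (index k gives k+1).\<close>
definition W_mat :: "real \<Rightarrow> nat \<Rightarrow> complex mat" where
  "W_mat \<gamma> n = mat (3*n) (3*n) (\<lambda>(i,j).
     (let bi = i div n; bj = j div n; d = complex_of_real (real (i mod n + 1)) in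
      if i mod n \<noteq> j mod n then 0
      else if bi = 0 \<and> bj = 1 then d
      else if bi = 1 \<and> bj = 0 then - d
      else if bi = 1 \<and> bj = 2 then complex_of_real \<gamma> * d
      else if bi = 2 \<and> bj = 1 then - complex_of_real \<gamma> * d
      else if bi = 2 \<and> bj = 2 then - (d * d)
      else 0))"

definition mat_exp :: "complex mat \<Rightarrow> complex mat" where
  "mat_exp A = mat (dim_row A) (dim_col A)
     (\<lambda>(i,j). \<Sum>k. (A ^\<^sub>m k) $$ (i,j) / of_nat (fact k))"

definition T_sg :: "real \<Rightarrow> nat \<Rightarrow> real \<Rightarrow> complex mat" where
  "T_sg \<gamma> n t = mat_exp (complex_of_real t \<cdot>\<^sub>m W_mat \<gamma> n)"

definition vec_norm :: "complex vec \<Rightarrow> real" where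
  "vec_norm v = sqrt (\<Sum>i<dim_vec v. (cmod (v $ i))^2)"

definition op_norm :: "complex mat \<Rightarrow> real" where
  "op_norm A = Sup {vec_norm (A *\<^sub>v v) | v. v \<in> carrier_vec (dim_col A) \<and> vec_norm v \<le> 1}"

end

theory Submission
  imports Defs "HOL-Analysis.Convex"
begin

(* W_n decouples into n independent modes: for k = r + 1 the coordinates (u, v, theta) of
   mode r satisfy u' = k v, v' = -k u + gamma k theta, theta' = -gamma k v - k^2 theta.
   The energy u^2 + v^2 + theta^2 is dissipated only through theta, but the Lyapunov function
   u^2 + v^2 + theta^2 + (beta/k) (gamma/2 u v + v theta) is equivalent to it and decays at a rate
   c that does not depend on k. Hence |T_n(t) y|^2 <= 3 e^(-c t) |y|^2 uniformly in n, which is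
   even stronger than the claim: since exp (-c t) <= 1/(c t) and the inverse of every mode block
   is bounded independently of k, |T_n(t) W_n^-1| <= M / sqrt t. *)

lemma pow_mat_Suc_left:
  assumes A: "A \<in> carrier_mat N N"
  shows "A ^\<^sub>m Suc m = A * A ^\<^sub>m m"
proof (induction m)
  case 0
  then show ?case using A by simp
next
  case (Suc m)
  have "A ^\<^sub>m Suc (Suc m) = (A * A ^\<^sub>m m) * A" using Suc by simp
  also have "\<dots> = A * (A ^\<^sub>m m * A)" using A by (intro assoc_mult_mat) auto
  finally show ?case by simp
qed

lemma pow_mat_smult:
  fixes A :: "'a :: comm_ring_1 mat"
  assumes A: "A \<in> carrier_mat N N"
  shows "(c \<cdot>\<^sub>m A) ^\<^sub>m m = c ^ m \<cdot>\<^sub>m A ^\<^sub>m m"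
proof (induction m)
  case 0
  then show ?case using A by (auto intro!: eq_matI)
next
  case (Suc m)
  then show ?case
    using A by (auto intro!: eq_matI sum.cong simp: scalar_prod_def sum_distrib_left)
qed

lemma pow_mat_entry_bound:
  fixes A :: "'a :: real_normed_div_algebra mat"
  assumes A: "A \<in> carrier_mat N N"
  obtains R where "\<And>m i j. i < N \<Longrightarrow> j < N \<Longrightarrow> norm ((A ^\<^sub>m m) $$ (i,j)) \<le> R ^ m"
proof
  define R where "R = (\<Sum>l<N. \<Sum>j<N. norm (A $$ (l,j)))"
  have column: "(\<Sum>l<N. norm (A $$ (l,j))) \<le> R" if "j < N" for j
    unfolding R_def using that
    by (intro sum_mono member_le_sum) (auto intro: sum_nonneg)
  have "0 \<le> R" unfolding R_def by (intro sum_nonneg) simp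
  show "norm ((A ^\<^sub>m m) $$ (i,j)) \<le> R ^ m" if "i < N" "j < N" for m i j
    using that
  proof (induction m arbitrary: i j)
    case 0
    then show ?case using A by simp
  next
    case (Suc m)
    have "norm ((A ^\<^sub>m Suc m) $$ (i,j)) = norm (\<Sum>l<N. (A ^\<^sub>m m) $$ (i,l) * A $$ (l,j))"
      using A Suc.prems by (simp add: scalar_prod_def lessThan_atLeast0)
    also have "\<dots> \<le> (\<Sum>l<N. R ^ m * norm (A $$ (l,j)))"
      by (intro sum_norm_le) (use Suc in \<open>auto simp: norm_mult intro: mult_right_mono\<close>)
    also have "\<dots> \<le> R ^ m * R"
      using column[OF \<open>j < N\<close>] \<open>0 \<le> R\<close> by (simp add: sum_distrib_left[symmetric] mult_left_mono)
    finally show ?case by (simp add: mult.commute)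
  qed
qed

lemma dim_mat_exp [simp]:
  "dim_row (mat_exp A) = dim_row A" "dim_col (mat_exp A) = dim_col A"
  by (simp_all add: mat_exp_def)

lemma mat_exp_carrier: "A \<in> carrier_mat N M \<Longrightarrow> mat_exp A \<in> carrier_mat N M"
  unfolding carrier_mat_def by simp

definition mat_exp_coeff :: "complex mat \<Rightarrow> nat \<Rightarrow> nat \<Rightarrow> nat \<Rightarrow> complex" where
  "mat_exp_coeff A i j m = (A ^\<^sub>m m) $$ (i,j) / fact m"

lemma mat_exp_smult_entry:
  assumes A: "A \<in> carrier_mat N N" and "i < N" "j < N"
  shows "mat_exp (z \<cdot>\<^sub>m A) $$ (i,j) = (\<Sum>m. mat_exp_coeff A i j m * z ^ m)"
  using assms by (simp add: mat_exp_def mat_exp_coeff_def pow_mat_smult[OF A] of_nat_fact mult_ac)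

lemma summable_mat_exp_series:
  assumes A: "A \<in> carrier_mat N N" and ij: "i < N" "j < N"
  shows "summable (\<lambda>m. mat_exp_coeff A i j m * z ^ m)"
proof -
  obtain R where R: "\<And>m i j. i < N \<Longrightarrow> j < N \<Longrightarrow> cmod ((A ^\<^sub>m m) $$ (i,j)) \<le> R ^ m"
    using pow_mat_entry_bound[OF A] by blast
  have bound: "norm (mat_exp_coeff A i j m * z ^ m) \<le> inverse (fact m) * (R * cmod z) ^ m" for m
  proof -
    have "norm (mat_exp_coeff A i j m * z ^ m) = cmod ((A ^\<^sub>m m) $$ (i,j)) * cmod z ^ m / fact m"
      by (simp add: mat_exp_coeff_def norm_mult norm_divide norm_power)
    also have "\<dots> \<le> R ^ m * cmod z ^ m / fact m"
      by (intro divide_right_mono mult_right_mono R ij) auto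
    also have "\<dots> = inverse (fact m) * (R * cmod z) ^ m"
      by (simp add: power_mult_distrib field_simps)
    finally show ?thesis .
  qed
  show ?thesis
    by (rule summable_norm_cancel, rule summable_comparison_test'[OF summable_exp]) (use bound in simp)
qed

lemma diffs_mat_exp_coeff:
  assumes A: "A \<in> carrier_mat N N" and "i < N" "j < N"
  shows "diffs (mat_exp_coeff A i j) m = (\<Sum>l<N. A $$ (i,l) * mat_exp_coeff A l j m)"
proof -
  have "(of_nat (Suc m) :: complex) / fact (Suc m) = 1 / fact m"
    by (simp add: fact_Suc del: of_nat_Suc)
  then have "diffs (mat_exp_coeff A i j) m = (A ^\<^sub>m Suc m) $$ (i,j) / fact m"
    unfolding diffs_def mat_exp_coeff_def by (metis times_divide_eq_left times_divide_eq_right mult_1)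
  also have "\<dots> = (\<Sum>l<N. A $$ (i,l) * mat_exp_coeff A l j m)"
    using assms by (simp add: pow_mat_Suc_left[OF A] scalar_prod_def lessThan_atLeast0
        mat_exp_coeff_def sum_divide_distrib del: pow_mat.simps)
  finally show ?thesis .
qed

lemma mat_exp_smult_entry_has_field_derivative:
  assumes A: "A \<in> carrier_mat N N" and ij: "i < N" "j < N"
  shows "((\<lambda>z. mat_exp (z \<cdot>\<^sub>m A) $$ (i,j)) has_field_derivative
           (A * mat_exp (z \<cdot>\<^sub>m A)) $$ (i,j)) (at z)"
proof -
  have summable: "summable (\<lambda>m. mat_exp_coeff A l j m * z ^ m)" if "l < N" for l z
    using summable_mat_exp_series[OF A that ij(2)] .
  have "((\<lambda>z. \<Sum>m. mat_exp_coeff A i j m * z ^ m) has_field_derivative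
          (\<Sum>m. diffs (mat_exp_coeff A i j) m * z ^ m)) (at z)"
    by (rule termdiffs_strong_converges_everywhere) (rule summable[OF ij(1)])
  moreover have "(\<Sum>m. diffs (mat_exp_coeff A i j) m * z ^ m) = (A * mat_exp (z \<cdot>\<^sub>m A)) $$ (i,j)"
  proof -
    have "(\<Sum>m. diffs (mat_exp_coeff A i j) m * z ^ m)
        = (\<Sum>m. \<Sum>l<N. A $$ (i,l) * (mat_exp_coeff A l j m * z ^ m))"
      by (simp add: diffs_mat_exp_coeff[OF A ij] sum_distrib_right mult.assoc)
    also have "\<dots> = (\<Sum>l<N. \<Sum>m. A $$ (i,l) * (mat_exp_coeff A l j m * z ^ m))"
      by (rule suminf_sum) (use summable_mult[OF summable] in simp)
    also have "\<dots> = (\<Sum>l<N. A $$ (i,l) * (\<Sum>m. mat_exp_coeff A l j m * z ^ m))"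
      by (rule sum.cong[OF refl]) (simp add: suminf_mult summable)
    also have "\<dots> = (A * mat_exp (z \<cdot>\<^sub>m A)) $$ (i,j)"
      using A ij by (auto simp: mat_exp_smult_entry scalar_prod_def lessThan_atLeast0 intro!: sum.cong)
    finally show ?thesis .
  qed
  ultimately show ?thesis
    using mat_exp_smult_entry[OF A ij] by simp
qed

lemma mat_exp_zero_smult:
  assumes A: "A \<in> carrier_mat N N"
  shows "mat_exp (0 \<cdot>\<^sub>m A) = 1\<^sub>m N"
proof (rule eq_matI)
  fix i j assume "i < dim_row (1\<^sub>m N)" "j < dim_col (1\<^sub>m N)"
  then show "mat_exp (0 \<cdot>\<^sub>m A) $$ (i,j) = 1\<^sub>m N $$ (i,j)"
    using mat_exp_smult_entry[OF A, of i j 0] A by (simp only: powser_zero) (simp add: mat_exp_coeff_def)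
qed (use A in simp_all)

lemma mat_exp_mult_vec_has_vector_derivative:
  assumes A: "A \<in> carrier_mat N N" and w: "w \<in> carrier_vec N" and i: "i < N"
  shows "((\<lambda>t. (mat_exp (complex_of_real t \<cdot>\<^sub>m A) *\<^sub>v w) $ i) has_vector_derivative
           (A *\<^sub>v (mat_exp (complex_of_real t \<cdot>\<^sub>m A) *\<^sub>v w)) $ i) (at t)"
proof -
  let ?E = "\<lambda>t. mat_exp (complex_of_real t \<cdot>\<^sub>m A)"
  have E: "?E t \<in> carrier_mat N N" for t
    using A by (intro mat_exp_carrier smult_carrier_mat)
  have entry: "(M *\<^sub>v w) $ i = (\<Sum>j<N. M $$ (i,j) * w $ j)" if "M \<in> carrier_mat N N" for M
    using that w i by (simp add: scalar_prod_def lessThan_atLeast0)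
  have "((\<lambda>t. ?E t $$ (i,j)) has_vector_derivative (A * ?E t) $$ (i,j)) (at t)" if "j < N" for j
    by (rule has_vector_derivative_real_field[OF mat_exp_smult_entry_has_field_derivative[OF A i that]])
  then have "((\<lambda>t. \<Sum>j<N. ?E t $$ (i,j) * w $ j) has_vector_derivative
          (\<Sum>j<N. (A * ?E t) $$ (i,j) * w $ j)) (at t)"
    by (intro has_vector_derivative_sum has_vector_derivative_mult_left) simp
  moreover have "(\<Sum>j<N. (A * ?E t) $$ (i,j) * w $ j) = (A *\<^sub>v (?E t *\<^sub>v w)) $ i"
    using entry[of "A * ?E t"] A E by (simp add: assoc_mult_mat_vec[OF A E w])
  ultimately show ?thesis
    using entry[OF E] by simp
qed

(* An m x m block matrix whose blocks are diagonal n x n matrices: F b b' r is the r-th diagonal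
   entry of block (b, b'). Regrouping the coordinates by mode r makes it block diagonal, with the
   m x m matrix F _ _ r acting on mode r. *)
definition modal_mat :: "nat \<Rightarrow> nat \<Rightarrow> (nat \<Rightarrow> nat \<Rightarrow> nat \<Rightarrow> 'a :: zero) \<Rightarrow> 'a mat" where
  "modal_mat m n F = mat (m*n) (m*n)
     (\<lambda>(i,j). if i mod n = j mod n then F (i div n) (j div n) (i mod n) else 0)"

lemma dim_modal_mat [simp]:
  "dim_row (modal_mat m n F) = m*n" "dim_col (modal_mat m n F) = m*n"
  unfolding modal_mat_def by (rule dim_row_mat dim_col_mat)+

lemma modal_mat_carrier: "modal_mat m n F \<in> carrier_mat (m*n) (m*n)"
  unfolding carrier_mat_def by simp

lemma mode_index_less: "b < m \<Longrightarrow> r < n \<Longrightarrow> b*n + r < m*(n::nat)"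
proof -
  assume "b < m" "r < n"
  then have "b*n + r < Suc b * n" by simp
  also have "\<dots> \<le> m*n" using \<open>b < m\<close> by (intro mult_le_mono1) simp
  finally show ?thesis .
qed

lemma mode_index_cases:
  fixes i m n :: nat
  assumes "i < m*n"
  obtains b r where "b < m" "r < n" "i = b*n + r"
proof -
  from assms have "n > 0" by (cases n) auto
  then have "i div n < m" "i mod n < n"
    using assms by (simp_all add: div_less_iff_less_mult)
  moreover have "i = i div n * n + i mod n" by simp
  ultimately show ?thesis using that by blast
qed

lemma modal_mat_index:
  assumes "b < m" "b' < m" "r < n" "s < n"
  shows "modal_mat m n F $$ (b*n + r, b'*n + s) = (if r = s then F b b' r else 0)"
proof -
  have "(b*n + r) div n = b" "(b*n + r) mod n = r" "(b'*n + s) div n = b'" "(b'*n + s) mod n = s"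
    using assms by simp_all
  then show ?thesis
    unfolding modal_mat_def using mode_index_less[OF assms(1,3)] mode_index_less[OF assms(2,4)]
    by (simp only: index_mat split)
qed

lemma sum_lessThan_mult_blocks:
  fixes m n :: nat
  shows "(\<Sum>i<m*n. f i) = (\<Sum>b<m. \<Sum>r<n. f (b*n + r))"
proof -
  have "(\<Sum>i<m*n. f i) = (\<Sum>b<m. \<Sum>i\<in>{b*n..<b*n + n}. f i)"
    using sum.nat_group[of f n m] by simp
  also have "\<dots> = (\<Sum>b<m. \<Sum>r<n. f (b*n + r))"
    by (simp add: sum.atLeastLessThan_shift_0 atLeast0LessThan comp_def)
  finally show ?thesis .
qed

lemma modal_mat_mult_vec:
  assumes v: "v \<in> carrier_vec (m*n)" and br: "b < m" "r < n"
  shows "(modal_mat m n F *\<^sub>v v) $ (b*n + r) = (\<Sum>c<m. F b c r * v $ (c*n + r))"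
proof -
  have "(modal_mat m n F *\<^sub>v v) $ (b*n + r) = (\<Sum>i<m*n. modal_mat m n F $$ (b*n + r, i) * v $ i)"
    using v mode_index_less[OF br] by (simp add: scalar_prod_def lessThan_atLeast0)
  also have "\<dots> = (\<Sum>c<m. \<Sum>s<n. modal_mat m n F $$ (b*n + r, c*n + s) * v $ (c*n + s))"
    by (simp only: sum_lessThan_mult_blocks)
  also have "\<dots> = (\<Sum>c<m. \<Sum>s<n. if s = r then F b c r * v $ (c*n + r) else 0)"
    using br by (intro sum.cong refl) (auto simp: modal_mat_index)
  also have "\<dots> = (\<Sum>c<m. F b c r * v $ (c*n + r))"
    using br by simp
  finally show ?thesis .
qed

lemma modal_mat_mult:
  "modal_mat m n F * modal_mat m n G = modal_mat m n (\<lambda>b b' r. \<Sum>c<m. F b c r * G c b' r)"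
  (is "_ = modal_mat m n ?H")
proof (rule eq_matI)
  fix i j assume "i < dim_row (modal_mat m n ?H)" "j < dim_col (modal_mat m n ?H)"
  then have "i < m*n" "j < m*n" by simp_all
  obtain b r where br: "b < m" "r < n" "i = b*n + r" by (rule mode_index_cases[OF \<open>i < m*n\<close>])
  obtain b' s where bs: "b' < m" "s < n" "j = b'*n + s" by (rule mode_index_cases[OF \<open>j < m*n\<close>])
  have "(modal_mat m n F * modal_mat m n G) $$ (i,j) = (modal_mat m n F *\<^sub>v col (modal_mat m n G) j) $ i"
    using \<open>i < m*n\<close> \<open>j < m*n\<close> by simp
  also have "\<dots> = (\<Sum>c<m. F b c r * col (modal_mat m n G) j $ (c*n + r))"
    unfolding br(3) by (rule modal_mat_mult_vec[OF _ br(1,2)]) (rule carrier_vecI, simp only: dim_col dim_modal_mat)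
  also have "\<dots> = (\<Sum>c<m. F b c r * (if r = s then G c b' r else 0))"
  proof (rule sum.cong[OF refl])
    fix c assume "c \<in> {..<m}"
    then have "modal_mat m n G $$ (c*n + r, j) = (if r = s then G c b' r else 0)"
      unfolding bs(3) using br bs by (intro modal_mat_index) simp_all
    then show "F b c r * col (modal_mat m n G) j $ (c*n + r) = F b c r * (if r = s then G c b' r else 0)"
      using \<open>c \<in> {..<m}\<close> br(2) \<open>j < m*n\<close> mode_index_less by simp
  qed
  also have "\<dots> = modal_mat m n ?H $$ (i,j)"
    unfolding br(3) bs(3) modal_mat_index[OF br(1) bs(1) br(2) bs(2)] by simp
  finally show "(modal_mat m n F * modal_mat m n G) $$ (i,j) = modal_mat m n ?H $$ (i,j)" .
qed simp_all

lemma modal_mat_one: "modal_mat m n (\<lambda>b b' r. if b = b' then 1 else 0) = 1\<^sub>m (m*n)"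
proof (rule eq_matI)
  fix i j assume "i < dim_row (1\<^sub>m (m*n))" "j < dim_col (1\<^sub>m (m*n))"
  then have "i < m*n" "j < m*n" by simp_all
  obtain b r where br: "b < m" "r < n" "i = b*n + r" by (rule mode_index_cases[OF \<open>i < m*n\<close>])
  obtain b' s where bs: "b' < m" "s < n" "j = b'*n + s" by (rule mode_index_cases[OF \<open>j < m*n\<close>])
  have "i = j \<longleftrightarrow> b = b' \<and> r = s"
  proof
    assume "i = j"
    have "i div n = b" "i mod n = r" "j div n = b'" "j mod n = s"
      using br bs by simp_all
    with \<open>i = j\<close> show "b = b' \<and> r = s" by simp
  qed (use br bs in simp)
  have "modal_mat m n (\<lambda>b b' r. if b = b' then 1 else 0) $$ (i,j) = (if r = s then if b = b' then 1 else 0 else 0)"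
    unfolding br(3) bs(3) by (rule modal_mat_index[OF br(1) bs(1) br(2) bs(2)])
  also have "\<dots> = 1\<^sub>m (m*n) $$ (i,j)"
    using \<open>i = j \<longleftrightarrow> b = b' \<and> r = s\<close> \<open>i < m*n\<close> \<open>j < m*n\<close> by simp
  finally show "modal_mat m n (\<lambda>b b' r. if b = b' then 1 else 0) $$ (i,j) = 1\<^sub>m (m*n) $$ (i,j)" .
qed simp_all

lemma modal_mat_cong:
  assumes "\<And>b b' r. b < m \<Longrightarrow> b' < m \<Longrightarrow> r < n \<Longrightarrow> F b b' r = G b b' r"
  shows "modal_mat m n F = modal_mat m n G"
proof (rule eq_matI)
  fix i j assume "i < dim_row (modal_mat m n G)" "j < dim_col (modal_mat m n G)"
  then have "i < m*n" "j < m*n" by simp_all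
  obtain b r where br: "b < m" "r < n" "i = b*n + r" by (rule mode_index_cases[OF \<open>i < m*n\<close>])
  obtain b' s where bs: "b' < m" "s < n" "j = b'*n + s" by (rule mode_index_cases[OF \<open>j < m*n\<close>])
  show "modal_mat m n F $$ (i,j) = modal_mat m n G $$ (i,j)"
    using assms br bs by (simp add: modal_mat_index)
qed simp_all

lemma vec_norm_nonneg: "0 \<le> vec_norm v"
  unfolding vec_norm_def by (simp add: sum_nonneg)

lemma vec_norm_sq: "v \<in> carrier_vec N \<Longrightarrow> (vec_norm v)\<^sup>2 = (\<Sum>i<N. (cmod (v $ i))\<^sup>2)"
  unfolding vec_norm_def by (simp add: sum_nonneg)

lemma vec_norm_modal_mat_mult_vec_le:
  assumes F: "\<And>b c r. b < m \<Longrightarrow> c < m \<Longrightarrow> r < n \<Longrightarrow> cmod (F b c r) \<le> C"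
    and C: "0 \<le> C" and v: "v \<in> carrier_vec (m*n)"
  shows "vec_norm (modal_mat m n F *\<^sub>v v) \<le> m * C * vec_norm v"
proof -
  let ?u = "modal_mat m n F *\<^sub>v v"
  define S where "S r = (\<Sum>c<m. (cmod (v $ (c*n + r)))\<^sup>2)" for r
  have u: "?u \<in> carrier_vec (m*n)"
    using mult_mat_vec_carrier[OF modal_mat_carrier v] .
  have row: "(cmod (?u $ (b*n + r)))\<^sup>2 \<le> m * C\<^sup>2 * S r" if br: "b < m" "r < n" for b r
  proof -
    have "cmod (?u $ (b*n + r)) \<le> (\<Sum>c<m. C * cmod (v $ (c*n + r)))"
      unfolding modal_mat_mult_vec[OF v br]
      by (intro sum_norm_le) (use F br in \<open>auto simp: norm_mult intro: mult_right_mono\<close>)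
    then have "(cmod (?u $ (b*n + r)))\<^sup>2 \<le> (\<Sum>c<m. C * cmod (v $ (c*n + r)))\<^sup>2"
      by (intro power_mono) auto
    also have "\<dots> \<le> (\<Sum>c<m. (C * cmod (v $ (c*n + r)))\<^sup>2) * card {..<m}"
      by (rule sum_squared_le_sum_of_squares)
    also have "\<dots> = m * C\<^sup>2 * S r"
      by (simp add: S_def power_mult_distrib sum_distrib_left mult_ac)
    finally show ?thesis .
  qed
  have "(vec_norm ?u)\<^sup>2 = (\<Sum>b<m. \<Sum>r<n. (cmod (?u $ (b*n + r)))\<^sup>2)"
    by (simp only: vec_norm_sq[OF u] sum_lessThan_mult_blocks)
  also have "\<dots> \<le> (\<Sum>b<m. \<Sum>r<n. m * C\<^sup>2 * S r)"
    by (intro sum_mono row) auto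
  also have "\<dots> = (\<Sum>r<n. (m * C)\<^sup>2 * S r)"
    by (simp add: sum_distrib_left power2_eq_square mult_ac)
  also have "\<dots> = (m * C)\<^sup>2 * (\<Sum>r<n. S r)"
    by (rule sum_distrib_left[symmetric])
  also have "(\<Sum>r<n. S r) = (vec_norm v)\<^sup>2"
    unfolding S_def vec_norm_sq[OF v] sum_lessThan_mult_blocks by (rule sum.swap)
  finally have "(vec_norm ?u)\<^sup>2 \<le> (m * C * vec_norm v)\<^sup>2"
    by (simp add: power_mult_distrib)
  then show ?thesis
    by (rule power2_le_imp_le) (simp add: C vec_norm_nonneg)
qed

lemma mat_inverse_eq:
  fixes A :: "'a :: field mat"
  assumes A: "A \<in> carrier_mat N N" and B: "B \<in> carrier_mat N N"
    and AB: "A * B = 1\<^sub>m N" and BA: "B * A = 1\<^sub>m N"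
  shows "the (mat_inverse A) = B"
proof (cases "mat_inverse A")
  case None
  have "A \<in> Units (ring_mat TYPE('a) N ())"
    using A B AB BA by (auto simp: Units_def ring_mat_def)
  with mat_inverse(1)[OF A None] show ?thesis by contradiction
next
  case (Some B')
  with mat_inverse(2)[OF A] have B'A: "B' * A = 1\<^sub>m N" and B': "B' \<in> carrier_mat N N"
    by auto
  have "B' = B' * (A * B)" using B' by (simp add: AB)
  also have "\<dots> = (B' * A) * B" using A B B' by (simp add: assoc_mult_mat)
  also have "\<dots> = B" using B by (simp add: B'A)
  finally show ?thesis using Some by simp
qed

lemma op_norm_le:
  assumes bound: "\<And>v. v \<in> carrier_vec (dim_col A) \<Longrightarrow> vec_norm v \<le> 1 \<Longrightarrow> vec_norm (A *\<^sub>v v) \<le> B"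
  shows "op_norm A \<le> B"
  unfolding op_norm_def
proof (rule cSup_least)
  let ?z = "0\<^sub>v (dim_col A) :: complex vec"
  have "vec_norm ?z \<le> 1"
    unfolding vec_norm_def by simp
  then have "vec_norm (A *\<^sub>v ?z) \<in> {vec_norm (A *\<^sub>v v) |v. v \<in> carrier_vec (dim_col A) \<and> vec_norm v \<le> 1}"
    by (intro CollectI exI[of _ ?z]) simp
  then show "{vec_norm (A *\<^sub>v v) |v. v \<in> carrier_vec (dim_col A) \<and> vec_norm v \<le> 1} \<noteq> {}"
    by (rule ex_in_conv[THEN iffD1, OF exI])
next
  fix x assume "x \<in> {vec_norm (A *\<^sub>v v) |v. v \<in> carrier_vec (dim_col A) \<and> vec_norm v \<le> 1}"
  then obtain v where "v \<in> carrier_vec (dim_col A)" "vec_norm v \<le> 1" "x = vec_norm (A *\<^sub>v v)"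
    by (auto simp only: mem_Collect_eq)
  then show "x \<le> B" using bound by simp
qed

definition W_block :: "real \<Rightarrow> nat \<Rightarrow> nat \<Rightarrow> nat \<Rightarrow> complex" where
  "W_block \<gamma> b b' r = (let d = complex_of_real (real (r + 1)) in
     if b = 0 \<and> b' = 1 then d
     else if b = 1 \<and> b' = 0 then - d
     else if b = 1 \<and> b' = 2 then complex_of_real \<gamma> * d
     else if b = 2 \<and> b' = 1 then - complex_of_real \<gamma> * d
     else if b = 2 \<and> b' = 2 then - (d * d)
     else 0)"

definition W_inv_block :: "real \<Rightarrow> nat \<Rightarrow> nat \<Rightarrow> nat \<Rightarrow> complex" where
  "W_inv_block \<gamma> b b' r = (let d = complex_of_real (real (r + 1)); g = complex_of_real \<gamma> in
     if b = 0 \<and> b' = 0 then - (g * g) / (d * d)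
     else if b = 0 \<and> b' = 1 then - 1 / d
     else if b = 0 \<and> b' = 2 then - g / (d * d)
     else if b = 1 \<and> b' = 0 then 1 / d
     else if b = 2 \<and> b' = 0 then - g / (d * d)
     else if b = 2 \<and> b' = 2 then - 1 / (d * d)
     else 0)"

lemma W_mat_modal: "W_mat \<gamma> n = modal_mat 3 n (W_block \<gamma>)"
  unfolding W_mat_def modal_mat_def W_block_def
  by (intro arg_cong[where f = "mat (3*n) (3*n)"] ext) (auto simp: Let_def)

lemma sum_lessThan_3: "(\<Sum>c<3. f c) = f 0 + f 1 + f (2::nat)"
  by (simp add: numeral_3_eq_3 numeral_2_eq_2)

lemma less_3_cases: "b < 3 \<Longrightarrow> b = 0 \<or> b = 1 \<or> b = (2::nat)"
  by auto

lemma W_block_inverse: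
  assumes "b < 3" "b' < 3"
  shows "(\<Sum>c<3. W_block \<gamma> b c r * W_inv_block \<gamma> c b' r) = (if b = b' then 1 else 0)"
    and "(\<Sum>c<3. W_inv_block \<gamma> b c r * W_block \<gamma> c b' r) = (if b = b' then 1 else 0)"
proof -
  define d where "d = complex_of_real (real (r + 1))"
  have "d \<noteq> 0" unfolding d_def by (simp only: of_real_eq_0_iff of_nat_eq_0_iff add_eq_0_iff_both_eq_0) simp
  then show "(\<Sum>c<3. W_block \<gamma> b c r * W_inv_block \<gamma> c b' r) = (if b = b' then 1 else 0)"
    "(\<Sum>c<3. W_inv_block \<gamma> b c r * W_block \<gamma> c b' r) = (if b = b' then 1 else 0)"
    using less_3_cases[OF assms(1)] less_3_cases[OF assms(2)]
    unfolding sum_lessThan_3 W_block_def W_inv_block_def Let_def d_def[symmetric]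
    by (auto simp: field_simps)
qed

lemma W_inverse: "the (mat_inverse (W_mat \<gamma> n)) = modal_mat 3 n (W_inv_block \<gamma>)"
proof (rule mat_inverse_eq)
  show "W_mat \<gamma> n * modal_mat 3 n (W_inv_block \<gamma>) = 1\<^sub>m (3*n)"
    unfolding W_mat_modal modal_mat_mult modal_mat_one[symmetric]
    by (rule modal_mat_cong) (rule W_block_inverse(1))
  show "modal_mat 3 n (W_inv_block \<gamma>) * W_mat \<gamma> n = 1\<^sub>m (3*n)"
    unfolding W_mat_modal modal_mat_mult modal_mat_one[symmetric]
    by (rule modal_mat_cong) (rule W_block_inverse(2))
qed (simp_all only: W_mat_modal modal_mat_carrier)

lemma W_inv_block_bound:
  assumes "0 \<le> \<gamma>"
  shows "cmod (W_inv_block \<gamma> b b' r) \<le> (1 + \<gamma>)\<^sup>2"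
proof -
  define k where "k = real (r + 1)"
  have k: "1 \<le> k" unfolding k_def by simp
  then have kk: "1 \<le> k * k" using mult_mono[OF k k] by simp
  have abs: "\<bar>k\<bar> = k" "\<bar>\<gamma>\<bar> = \<gamma>"
    using k assms by simp_all
  have "\<gamma> * \<gamma> / (k * k) \<le> \<gamma> * \<gamma>" "1 / k \<le> 1" "\<gamma> / (k * k) \<le> \<gamma>" "1 / (k * k) \<le> 1"
    using k kk assms by (simp_all add: divide_le_eq mult_le_cancel_left1)
  moreover have "\<gamma> * \<gamma> \<le> (1 + \<gamma>)\<^sup>2" "1 \<le> (1 + \<gamma>)\<^sup>2" "\<gamma> \<le> (1 + \<gamma>)\<^sup>2"
    using assms by (simp_all add: power2_eq_square algebra_simps)
  ultimately have "\<gamma> * \<gamma> / (k * k) \<le> (1 + \<gamma>)\<^sup>2" "1 / k \<le> (1 + \<gamma>)\<^sup>2"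
    "\<gamma> / (k * k) \<le> (1 + \<gamma>)\<^sup>2" "1 / (k * k) \<le> (1 + \<gamma>)\<^sup>2" "0 \<le> (1 + \<gamma>)\<^sup>2"
    by linarith+
  then show ?thesis
    unfolding W_inv_block_def Let_def k_def[symmetric]
    by (simp add: norm_divide norm_mult abs)
qed

lemma exp_decay_of_deriv_le:
  fixes f :: "real \<Rightarrow> real"
  assumes deriv: "\<And>s. \<exists>D. (f has_real_derivative D) (at s) \<and> D \<le> - c * f s" and t: "0 \<le> t"
  shows "f t \<le> exp (- c * t) * f 0"
proof -
  have "exp (c * t) * f t \<le> exp (c * 0) * f 0"
  proof (rule DERIV_nonpos_imp_nonincreasing[OF t, where f = "\<lambda>s. exp (c * s) * f s"])
    fix s
    obtain D where D: "(f has_real_derivative D) (at s)" "D \<le> - c * f s"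
      using deriv by blast
    have "((\<lambda>s. exp (c * s) * f s) has_real_derivative exp (c * s) * (c * f s + D)) (at s)"
      by (rule derivative_eq_intros D(1) refl | simp add: algebra_simps)+
    moreover have "exp (c * s) * (c * f s + D) \<le> 0"
      using D(2) by (intro mult_nonneg_nonpos) auto
    ultimately show "\<exists>y. ((\<lambda>s. exp (c * s) * f s) has_real_derivative y) (at s) \<and> y \<le> 0"
      by blast
  qed
  then show ?thesis
    by (simp add: exp_minus field_simps)
qed

lemma mult_le_weighted_squares:
  fixes g a p q :: real
  assumes "0 < g"
  shows "a * p * q \<le> g / 4 * p\<^sup>2 + a\<^sup>2 / g * q\<^sup>2"
proof -
  have "0 \<le> (g / 2 * p - a * q)\<^sup>2 / g" using assms by simp
  also have "\<dots> = g / 4 * p\<^sup>2 + a\<^sup>2 / g * q\<^sup>2 - a * p * q"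
    using assms by (simp add: field_simps power2_eq_square)
  finally show ?thesis by simp
qed

definition mode_lyapunov :: "real \<Rightarrow> real \<Rightarrow> real \<Rightarrow> real \<Rightarrow> real \<Rightarrow> real \<Rightarrow> real" where
  "mode_lyapunov \<gamma> \<beta> k x y z = x\<^sup>2 + y\<^sup>2 + z\<^sup>2 + \<beta> / k * (\<gamma> / 2 * x * y + y * z)"

lemma mode_lyapunov_bounds:
  assumes k: "1 \<le> k" and \<beta>: "0 \<le> \<beta>" and \<gamma>: "0 \<le> \<gamma>" and small: "\<beta> * (\<gamma> / 2 + 1) \<le> 1"
  shows "(x\<^sup>2 + y\<^sup>2 + z\<^sup>2) / 2 \<le> mode_lyapunov \<gamma> \<beta> k x y z"
    and "mode_lyapunov \<gamma> \<beta> k x y z \<le> 3 / 2 * (x\<^sup>2 + y\<^sup>2 + z\<^sup>2)"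
proof -
  have "0 \<le> (\<bar>x\<bar> - \<bar>y\<bar>)\<^sup>2" "0 \<le> (\<bar>y\<bar> - \<bar>z\<bar>)\<^sup>2" by simp_all
  then have xy2: "\<bar>x * y\<bar> \<le> (x\<^sup>2 + y\<^sup>2) / 2" and yz2: "\<bar>y * z\<bar> \<le> (y\<^sup>2 + z\<^sup>2) / 2"
    by (simp_all add: power2_eq_square algebra_simps abs_mult)
  have xy: "\<bar>x * y\<bar> \<le> (x\<^sup>2 + y\<^sup>2 + z\<^sup>2) / 2"
    using xy2 by (rule order_trans) (simp add: divide_right_mono)
  have yz: "\<bar>y * z\<bar> \<le> (x\<^sup>2 + y\<^sup>2 + z\<^sup>2) / 2"
    using yz2 by (rule order_trans) (simp add: divide_right_mono)
  have "\<bar>\<beta> / k * (\<gamma> / 2 * x * y + y * z)\<bar> \<le> \<beta> * (\<gamma> / 2 * \<bar>x * y\<bar> + \<bar>y * z\<bar>)"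
  proof -
    have "\<bar>\<beta> / k\<bar> \<le> \<beta>" using k \<beta> by (simp add: divide_le_eq mult_le_cancel_left1)
    moreover have "\<bar>\<gamma> / 2 * x * y + y * z\<bar> \<le> \<gamma> / 2 * \<bar>x * y\<bar> + \<bar>y * z\<bar>"
      using \<gamma> abs_triangle_ineq[of "\<gamma> / 2 * x * y" "y * z"] by (simp add: abs_mult)
    ultimately show ?thesis
      unfolding abs_mult[of "\<beta> / k"] using \<beta> by (intro mult_mono) auto
  qed
  also have "\<dots> \<le> \<beta> * (\<gamma> / 2 * ((x\<^sup>2 + y\<^sup>2 + z\<^sup>2) / 2) + (x\<^sup>2 + y\<^sup>2 + z\<^sup>2) / 2)"
    using xy yz \<beta> \<gamma> by (intro mult_left_mono add_mono) auto
  also have "\<dots> = \<beta> * (\<gamma> / 2 + 1) * ((x\<^sup>2 + y\<^sup>2 + z\<^sup>2) / 2)"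
    by (simp add: field_simps)
  also have "\<dots> \<le> (x\<^sup>2 + y\<^sup>2 + z\<^sup>2) / 2"
    using small by (intro mult_left_le_one_le) (auto simp: \<beta> \<gamma>)
  finally have cross: "\<bar>\<beta> / k * (\<gamma> / 2 * x * y + y * z)\<bar> \<le> (x\<^sup>2 + y\<^sup>2 + z\<^sup>2) / 2" .
  define T where "T = \<beta> / k * (\<gamma> / 2 * x * y + y * z)"
  have L: "mode_lyapunov \<gamma> \<beta> k x y z = x\<^sup>2 + y\<^sup>2 + z\<^sup>2 + T"
    unfolding mode_lyapunov_def T_def ..
  define E where "E = x\<^sup>2 + y\<^sup>2 + z\<^sup>2"
  have "- (E / 2) \<le> T" and "T \<le> E / 2"
    using cross[folded T_def E_def] unfolding abs_le_iff by linarith+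
  then show "(x\<^sup>2 + y\<^sup>2 + z\<^sup>2) / 2 \<le> mode_lyapunov \<gamma> \<beta> k x y z"
    and "mode_lyapunov \<gamma> \<beta> k x y z \<le> 3 / 2 * (x\<^sup>2 + y\<^sup>2 + z\<^sup>2)"
    unfolding L E_def[symmetric] by linarith+
qed

lemma mode_lyapunov_has_derivative:
  assumes x: "(x has_real_derivative k * y s) (at s)"
    and y: "(y has_real_derivative - k * x s + \<gamma> * k * z s) (at s)"
    and z: "(z has_real_derivative - \<gamma> * k * y s - k * k * z s) (at s)"
    and k: "k \<noteq> 0"
  shows "((\<lambda>s. mode_lyapunov \<gamma> \<beta> k (x s) (y s) (z s)) has_real_derivative
      - \<beta> * \<gamma> / 2 * ((x s)\<^sup>2 + (y s)\<^sup>2) + \<beta> * (\<gamma>\<^sup>2 / 2 - 1) * x s * z s - \<beta> * k * y s * z s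
      + (\<beta> * \<gamma> - 2 * k\<^sup>2) * (z s)\<^sup>2) (at s)"
  unfolding mode_lyapunov_def
  by (rule derivative_eq_intros x y z refl | simp)+ (use k in \<open>simp add: field_simps power2_eq_square\<close>)

lemma mode_dissipation_le:
  fixes \<gamma> \<beta> k x y z :: real
  defines "Q \<equiv> \<gamma> + (\<gamma>\<^sup>2 / 2 - 1)\<^sup>2 / \<gamma> + 1 / \<gamma>"
  assumes \<gamma>: "0 < \<gamma>" and k: "1 \<le> k" and \<beta>: "0 < \<beta>" and small: "\<beta> * Q \<le> 1"
  shows "- \<beta> * \<gamma> / 2 * (x\<^sup>2 + y\<^sup>2) + \<beta> * (\<gamma>\<^sup>2 / 2 - 1) * x * z - \<beta> * k * y * z
      + (\<beta> * \<gamma> - 2 * k\<^sup>2) * z\<^sup>2 \<le> - \<beta> * \<gamma> / 4 * (x\<^sup>2 + y\<^sup>2) - z\<^sup>2"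
proof -
  have young1: "\<beta> * ((\<gamma>\<^sup>2 / 2 - 1) * x * z) \<le> \<beta> * (\<gamma> / 4 * x\<^sup>2 + (\<gamma>\<^sup>2 / 2 - 1)\<^sup>2 / \<gamma> * z\<^sup>2)"
    using mult_le_weighted_squares[OF \<gamma>] \<beta> by (intro mult_left_mono) auto
  have young2: "\<beta> * ((- k) * y * z) \<le> \<beta> * (\<gamma> / 4 * y\<^sup>2 + k\<^sup>2 / \<gamma> * z\<^sup>2)"
    using mult_le_weighted_squares[OF \<gamma>, of "- k" y z] \<beta> by (intro mult_left_mono) auto
  have coeff: "\<beta> * \<gamma> + \<beta> * (\<gamma>\<^sup>2 / 2 - 1)\<^sup>2 / \<gamma> + \<beta> * k\<^sup>2 / \<gamma> \<le> k\<^sup>2"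
  proof -
    have k2: "1 \<le> k\<^sup>2" using k by (simp add: one_le_power)
    have "\<beta> * \<gamma> + \<beta> * (\<gamma>\<^sup>2 / 2 - 1)\<^sup>2 / \<gamma> \<le> (\<beta> * \<gamma> + \<beta> * (\<gamma>\<^sup>2 / 2 - 1)\<^sup>2 / \<gamma>) * k\<^sup>2"
      using mult_left_mono[OF k2, of "\<beta> * \<gamma> + \<beta> * (\<gamma>\<^sup>2 / 2 - 1)\<^sup>2 / \<gamma>"] \<beta> \<gamma> by simp
    also have "\<dots> + \<beta> * k\<^sup>2 / \<gamma> = \<beta> * Q * k\<^sup>2"
      unfolding Q_def by (simp add: algebra_simps add_divide_distrib)
    also have "\<dots> \<le> k\<^sup>2"
      using mult_right_mono[OF small, of "k\<^sup>2"] by simp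
    finally show ?thesis by simp
  qed
  have "- \<beta> * \<gamma> / 2 * (x\<^sup>2 + y\<^sup>2) + \<beta> * (\<gamma>\<^sup>2 / 2 - 1) * x * z - \<beta> * k * y * z
      + (\<beta> * \<gamma> - 2 * k\<^sup>2) * z\<^sup>2
      = - (\<beta> * \<gamma> / 2) * x\<^sup>2 - (\<beta> * \<gamma> / 2) * y\<^sup>2 + \<beta> * ((\<gamma>\<^sup>2 / 2 - 1) * x * z)
        + \<beta> * ((- k) * y * z) + (\<beta> * \<gamma> - 2 * k\<^sup>2) * z\<^sup>2"
    by (simp add: algebra_simps)
  also have "\<dots> \<le> - (\<beta> * \<gamma> / 2) * x\<^sup>2 - (\<beta> * \<gamma> / 2) * y\<^sup>2
        + \<beta> * (\<gamma> / 4 * x\<^sup>2 + (\<gamma>\<^sup>2 / 2 - 1)\<^sup>2 / \<gamma> * z\<^sup>2)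
        + \<beta> * (\<gamma> / 4 * y\<^sup>2 + k\<^sup>2 / \<gamma> * z\<^sup>2) + (\<beta> * \<gamma> - 2 * k\<^sup>2) * z\<^sup>2"
    using young1 young2 by linarith
  also have "\<dots> = - \<beta> * \<gamma> / 4 * (x\<^sup>2 + y\<^sup>2)
        + (\<beta> * \<gamma> + \<beta> * (\<gamma>\<^sup>2 / 2 - 1)\<^sup>2 / \<gamma> + \<beta> * k\<^sup>2 / \<gamma>) * z\<^sup>2 - 2 * k\<^sup>2 * z\<^sup>2"
    by (simp add: algebra_simps)
  also have "\<dots> \<le> - \<beta> * \<gamma> / 4 * (x\<^sup>2 + y\<^sup>2) + k\<^sup>2 * z\<^sup>2 - 2 * k\<^sup>2 * z\<^sup>2"
    using mult_right_mono[OF coeff, of "z\<^sup>2"] by simp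
  also have "\<dots> \<le> - \<beta> * \<gamma> / 4 * (x\<^sup>2 + y\<^sup>2) - z\<^sup>2"
    using k by (simp add: mult_le_cancel_right1 one_le_power)
  finally show ?thesis .
qed

definition mode_weight :: "real \<Rightarrow> real" where
  "mode_weight \<gamma> = 1 / (\<gamma> + (\<gamma>\<^sup>2 / 2 - 1)\<^sup>2 / \<gamma> + 1 / \<gamma> + \<gamma> / 2 + 1)"

definition mode_decay_rate :: "real \<Rightarrow> real" where
  "mode_decay_rate \<gamma> = mode_weight \<gamma> * \<gamma> / 6"

lemma mode_weight_bounds:
  assumes "0 < \<gamma>"
  shows "0 < mode_weight \<gamma>"
    and "mode_weight \<gamma> * (\<gamma> + (\<gamma>\<^sup>2 / 2 - 1)\<^sup>2 / \<gamma> + 1 / \<gamma>) \<le> 1"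
    and "mode_weight \<gamma> * (\<gamma> / 2 + 1) \<le> 1"
proof -
  define Q where "Q = \<gamma> + (\<gamma>\<^sup>2 / 2 - 1)\<^sup>2 / \<gamma> + 1 / \<gamma>"
  have Q: "0 < Q" unfolding Q_def using assms by (simp add: add_pos_nonneg)
  have w: "mode_weight \<gamma> = 1 / (Q + (\<gamma> / 2 + 1))"
    unfolding mode_weight_def Q_def by (simp add: add.assoc)
  show "0 < mode_weight \<gamma>" unfolding w using Q assms by simp
  show "mode_weight \<gamma> * (\<gamma> + (\<gamma>\<^sup>2 / 2 - 1)\<^sup>2 / \<gamma> + 1 / \<gamma>) \<le> 1"
    unfolding Q_def[symmetric] w using Q assms by (simp add: divide_le_eq)
  show "mode_weight \<gamma> * (\<gamma> / 2 + 1) \<le> 1"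
    unfolding w using Q assms by (simp add: divide_le_eq)
qed

lemma mode_decay_rate_pos: "0 < \<gamma> \<Longrightarrow> 0 < mode_decay_rate \<gamma>"
  unfolding mode_decay_rate_def using mode_weight_bounds(1) by simp

lemma real_mode_decay:
  fixes x y z :: "real \<Rightarrow> real"
  assumes \<gamma>: "0 < \<gamma>" and k: "1 \<le> k"
    and x: "\<And>s. (x has_real_derivative k * y s) (at s)"
    and y: "\<And>s. (y has_real_derivative - k * x s + \<gamma> * k * z s) (at s)"
    and z: "\<And>s. (z has_real_derivative - \<gamma> * k * y s - k * k * z s) (at s)"
    and t: "0 \<le> t"
  shows "(x t)\<^sup>2 + (y t)\<^sup>2 + (z t)\<^sup>2
      \<le> 3 * exp (- mode_decay_rate \<gamma> * t) * ((x 0)\<^sup>2 + (y 0)\<^sup>2 + (z 0)\<^sup>2)"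
proof -
  define \<beta> where "\<beta> = mode_weight \<gamma>"
  define c where "c = mode_decay_rate \<gamma>"
  define L where "L s = mode_lyapunov \<gamma> \<beta> k (x s) (y s) (z s)" for s
  define E where "E s = (x s)\<^sup>2 + (y s)\<^sup>2 + (z s)\<^sup>2" for s
  have \<beta>: "0 < \<beta>" "\<beta> * (\<gamma> + (\<gamma>\<^sup>2 / 2 - 1)\<^sup>2 / \<gamma> + 1 / \<gamma>) \<le> 1" "\<beta> * (\<gamma> / 2 + 1) \<le> 1"
    unfolding \<beta>_def using mode_weight_bounds[OF \<gamma>] by auto
  have bounds: "E s / 2 \<le> L s" "L s \<le> 3 / 2 * E s" for s
    unfolding E_def L_def using mode_lyapunov_bounds[OF k] \<beta> \<gamma> by auto
  have "\<exists>D. (L has_real_derivative D) (at s) \<and> D \<le> - c * L s" for s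
  proof (intro exI conjI)
    show "(L has_real_derivative - \<beta> * \<gamma> / 2 * ((x s)\<^sup>2 + (y s)\<^sup>2) + \<beta> * (\<gamma>\<^sup>2 / 2 - 1) * x s * z s
        - \<beta> * k * y s * z s + (\<beta> * \<gamma> - 2 * k\<^sup>2) * (z s)\<^sup>2) (at s)"
      unfolding L_def[abs_def] using k by (intro mode_lyapunov_has_derivative x y z) auto
    have "\<beta> * \<gamma> / 2 + \<beta> \<le> 1" using \<beta>(3) by (simp add: distrib_left)
    then have "\<beta> * \<gamma> / 4 \<le> 1" using \<beta>(1) by linarith
    then have "\<beta> * \<gamma> / 4 * (z s)\<^sup>2 \<le> (z s)\<^sup>2"
      using \<beta>(1) \<gamma> by (intro mult_left_le_one_le) auto
    then have "- \<beta> * \<gamma> / 4 * ((x s)\<^sup>2 + (y s)\<^sup>2) - (z s)\<^sup>2 \<le> - (\<beta> * \<gamma> / 4) * E s"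
      unfolding E_def by (simp add: algebra_simps)
    also have "\<dots> \<le> - c * L s"
      using bounds(2)[of s] \<beta>(1) \<gamma> unfolding c_def mode_decay_rate_def \<beta>_def[symmetric] by simp
    finally show "- \<beta> * \<gamma> / 2 * ((x s)\<^sup>2 + (y s)\<^sup>2) + \<beta> * (\<gamma>\<^sup>2 / 2 - 1) * x s * z s
        - \<beta> * k * y s * z s + (\<beta> * \<gamma> - 2 * k\<^sup>2) * (z s)\<^sup>2 \<le> - c * L s"
      by (rule order_trans[OF mode_dissipation_le[OF \<gamma> k \<beta>(1,2)]])
  qed
  then have "L t \<le> exp (- c * t) * L 0"
    by (rule exp_decay_of_deriv_le[OF _ t])
  moreover have "exp (- c * t) * L 0 \<le> exp (- c * t) * (3 / 2 * E 0)"
    using bounds(2)[of 0] by (rule mult_left_mono) simp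
  ultimately have "E t \<le> 3 * exp (- c * t) * E 0"
    using bounds(1)[of t] by linarith
  then show ?thesis
    unfolding E_def c_def .
qed

lemma complex_mode_decay:
  fixes p q w :: "real \<Rightarrow> complex"
  assumes \<gamma>: "0 < \<gamma>" and k: "1 \<le> k"
    and p: "\<And>s. (p has_vector_derivative of_real k * q s) (at s)"
    and q: "\<And>s. (q has_vector_derivative - of_real k * p s + of_real (\<gamma> * k) * w s) (at s)"
    and w: "\<And>s. (w has_vector_derivative - of_real (\<gamma> * k) * q s - of_real (k * k) * w s) (at s)"
    and t: "0 \<le> t"
  shows "(cmod (p t))\<^sup>2 + (cmod (q t))\<^sup>2 + (cmod (w t))\<^sup>2
      \<le> 3 * exp (- mode_decay_rate \<gamma> * t) * ((cmod (p 0))\<^sup>2 + (cmod (q 0))\<^sup>2 + (cmod (w 0))\<^sup>2)"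
proof -
  have "(Re (p t))\<^sup>2 + (Re (q t))\<^sup>2 + (Re (w t))\<^sup>2
      \<le> 3 * exp (- mode_decay_rate \<gamma> * t) * ((Re (p 0))\<^sup>2 + (Re (q 0))\<^sup>2 + (Re (w 0))\<^sup>2)"
    by (rule real_mode_decay[OF \<gamma> k _ _ _ t])
      (use has_field_derivative_Re[OF p] has_field_derivative_Re[OF q] has_field_derivative_Re[OF w]
        in \<open>simp_all add: algebra_simps\<close>)
  moreover have "(Im (p t))\<^sup>2 + (Im (q t))\<^sup>2 + (Im (w t))\<^sup>2
      \<le> 3 * exp (- mode_decay_rate \<gamma> * t) * ((Im (p 0))\<^sup>2 + (Im (q 0))\<^sup>2 + (Im (w 0))\<^sup>2)"
    by (rule real_mode_decay[OF \<gamma> k _ _ _ t])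
      (use has_field_derivative_Im[OF p] has_field_derivative_Im[OF q] has_field_derivative_Im[OF w]
        in \<open>simp_all add: algebra_simps\<close>)
  ultimately show ?thesis
    unfolding cmod_power2 by (simp add: algebra_simps)
qed

lemma W_mat_carrier: "W_mat \<gamma> n \<in> carrier_mat (3*n) (3*n)"
  unfolding W_mat_modal by (rule modal_mat_carrier)

lemma T_sg_carrier: "T_sg \<gamma> n t \<in> carrier_mat (3*n) (3*n)"
  unfolding T_sg_def by (intro mat_exp_carrier smult_carrier_mat W_mat_carrier)

lemma T_sg_zero: "T_sg \<gamma> n 0 = 1\<^sub>m (3*n)"
  unfolding T_sg_def using mat_exp_zero_smult[OF W_mat_carrier] by simp

lemma T_sg_mult_vec_has_vector_derivative:
  assumes w: "w \<in> carrier_vec (3*n)" and br: "b < 3" "r < n"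
  shows "((\<lambda>s. (T_sg \<gamma> n s *\<^sub>v w) $ (b*n + r)) has_vector_derivative
           (\<Sum>c<3. W_block \<gamma> b c r * (T_sg \<gamma> n s *\<^sub>v w) $ (c*n + r))) (at s)"
proof -
  have "(W_mat \<gamma> n *\<^sub>v (T_sg \<gamma> n s *\<^sub>v w)) $ (b*n + r)
      = (\<Sum>c<3. W_block \<gamma> b c r * (T_sg \<gamma> n s *\<^sub>v w) $ (c*n + r))"
    unfolding W_mat_modal using mult_mat_vec_carrier[OF T_sg_carrier w] br
    by (rule modal_mat_mult_vec)
  moreover have "((\<lambda>s. (T_sg \<gamma> n s *\<^sub>v w) $ (b*n + r)) has_vector_derivative
      (W_mat \<gamma> n *\<^sub>v (T_sg \<gamma> n s *\<^sub>v w)) $ (b*n + r)) (at s)"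
    unfolding T_sg_def
    by (rule mat_exp_mult_vec_has_vector_derivative[OF W_mat_carrier w mode_index_less[OF br]])
  ultimately show ?thesis by simp
qed

lemma T_sg_mult_vec_decay:
  assumes \<gamma>: "0 < \<gamma>" and w: "w \<in> carrier_vec (3*n)" and t: "0 \<le> t"
  shows "(vec_norm (T_sg \<gamma> n t *\<^sub>v w))\<^sup>2 \<le> 3 * exp (- mode_decay_rate \<gamma> * t) * (vec_norm w)\<^sup>2"
proof -
  define y where "y s = T_sg \<gamma> n s *\<^sub>v w" for s
  define e where "e = 3 * exp (- mode_decay_rate \<gamma> * t)"
  have y: "y s \<in> carrier_vec (3*n)" for s
    unfolding y_def by (rule mult_mat_vec_carrier[OF T_sg_carrier w])
  have y0: "y 0 = w"
    unfolding y_def T_sg_zero using w by simp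
  have mode: "(\<Sum>b<3. (cmod (y t $ (b*n + r)))\<^sup>2) \<le> e * (\<Sum>b<3. (cmod (w $ (b*n + r)))\<^sup>2)"
    if r: "r < n" for r
  proof -
    have d: "((\<lambda>s. y s $ (b*n + r)) has_vector_derivative
        (\<Sum>c<3. W_block \<gamma> b c r * y s $ (c*n + r))) (at s)" if "b < 3" for b s
      unfolding y_def using T_sg_mult_vec_has_vector_derivative[OF w that r] .
    have "(cmod (y t $ r))\<^sup>2 + (cmod (y t $ (n + r)))\<^sup>2 + (cmod (y t $ (2*n + r)))\<^sup>2
        \<le> e * ((cmod (y 0 $ r))\<^sup>2 + (cmod (y 0 $ (n + r)))\<^sup>2 + (cmod (y 0 $ (2*n + r)))\<^sup>2)"
      unfolding e_def
    proof (rule complex_mode_decay[OF \<gamma>, of "real (r + 1)"])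
      fix s
      show "((\<lambda>s. y s $ r) has_vector_derivative of_real (real (r + 1)) * y s $ (n + r)) (at s)"
        using d[of 0 s] by (simp add: sum_lessThan_3 W_block_def Let_def algebra_simps)
      show "((\<lambda>s. y s $ (n + r)) has_vector_derivative
          - of_real (real (r + 1)) * y s $ r + of_real (\<gamma> * real (r + 1)) * y s $ (2*n + r)) (at s)"
        using d[of 1 s] by (simp add: sum_lessThan_3 W_block_def Let_def algebra_simps)
      show "((\<lambda>s. y s $ (2*n + r)) has_vector_derivative
          - of_real (\<gamma> * real (r + 1)) * y s $ (n + r) - of_real (real (r + 1) * real (r + 1)) * y s $ (2*n + r)) (at s)"
        using d[of 2 s] by (simp add: sum_lessThan_3 W_block_def Let_def algebra_simps)
    qed (use t in simp_all)
    then show ?thesis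
      unfolding y0 by (simp add: sum_lessThan_3)
  qed
  have "(vec_norm (y t))\<^sup>2 = (\<Sum>r<n. \<Sum>b<3. (cmod (y t $ (b*n + r)))\<^sup>2)"
    unfolding vec_norm_sq[OF y] sum_lessThan_mult_blocks by (rule sum.swap)
  also have "\<dots> \<le> (\<Sum>r<n. e * (\<Sum>b<3. (cmod (w $ (b*n + r)))\<^sup>2))"
    by (intro sum_mono mode) simp
  also have "\<dots> = e * (vec_norm w)\<^sup>2"
    unfolding vec_norm_sq[OF w] sum_lessThan_mult_blocks sum_distrib_left[symmetric]
    by (subst sum.swap) (rule refl)
  finally show ?thesis
    unfolding y_def e_def .
qed

lemma exp_minus_le_inverse: "0 < (x::real) \<Longrightarrow> exp (- x) \<le> 1 / x"
proof -
  assume "0 < x"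
  moreover have "x \<le> exp x"
    using exp_ge_add_one_self[of x] by linarith
  ultimately show "exp (- x) \<le> 1 / x"
    by (simp add: exp_minus divide_simps)
qed

lemma T_sg_mult_vec_norm_le:
  assumes \<gamma>: "0 < \<gamma>" and w: "w \<in> carrier_vec (3*n)" and t: "0 < t"
  shows "vec_norm (T_sg \<gamma> n t *\<^sub>v w) \<le> sqrt (3 / (mode_decay_rate \<gamma> * t)) * vec_norm w"
proof -
  define c where "c = mode_decay_rate \<gamma>"
  have ct: "0 < c * t" unfolding c_def using mode_decay_rate_pos[OF \<gamma>] t by simp
  have "(vec_norm (T_sg \<gamma> n t *\<^sub>v w))\<^sup>2 \<le> 3 * exp (- (c * t)) * (vec_norm w)\<^sup>2"
    using T_sg_mult_vec_decay[OF \<gamma> w less_imp_le[OF t]] unfolding c_def by simp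
  also have "\<dots> \<le> 3 * (1 / (c * t)) * (vec_norm w)\<^sup>2"
    using exp_minus_le_inverse[OF ct] by (intro mult_right_mono mult_left_mono) auto
  also have "\<dots> = (sqrt (3 / (c * t)) * vec_norm w)\<^sup>2"
    using ct by (simp add: power_mult_distrib)
  finally have "(vec_norm (T_sg \<gamma> n t *\<^sub>v w))\<^sup>2 \<le> (sqrt (3 / (c * t)) * vec_norm w)\<^sup>2" .
  then have "vec_norm (T_sg \<gamma> n t *\<^sub>v w) \<le> sqrt (3 / (c * t)) * vec_norm w"
    by (rule power2_le_imp_le) (use ct in \<open>simp add: vec_norm_nonneg\<close>)
  then show ?thesis
    unfolding c_def .
qed

lemma W_inverse_carrier: "the (mat_inverse (W_mat \<gamma> n)) \<in> carrier_mat (3*n) (3*n)"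
  unfolding W_inverse by (rule modal_mat_carrier)

lemma W_inverse_mult_vec_norm_le:
  assumes "0 \<le> \<gamma>" and v: "v \<in> carrier_vec (3*n)"
  shows "vec_norm (the (mat_inverse (W_mat \<gamma> n)) *\<^sub>v v) \<le> 3 * (1 + \<gamma>)\<^sup>2 * vec_norm v"
  using vec_norm_modal_mat_mult_vec_le[of 3 n "W_inv_block \<gamma>" "(1 + \<gamma>)\<^sup>2", OF _ _ v]
    W_inv_block_bound[OF assms(1)] unfolding W_inverse by simp

lemma T_sg_W_inverse_mult_vec_norm_le:
  assumes \<gamma>: "0 < \<gamma>" and t: "0 < t" and v: "v \<in> carrier_vec (3*n)"
  shows "vec_norm ((T_sg \<gamma> n t * the (mat_inverse (W_mat \<gamma> n))) *\<^sub>v v)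
      \<le> 3 * (1 + \<gamma>)\<^sup>2 * sqrt (3 / mode_decay_rate \<gamma>) / sqrt t * vec_norm v"
proof -
  let ?B = "the (mat_inverse (W_mat \<gamma> n))"
  have c: "0 < mode_decay_rate \<gamma>" using mode_decay_rate_pos[OF \<gamma>] .
  have "vec_norm ((T_sg \<gamma> n t * ?B) *\<^sub>v v) = vec_norm (T_sg \<gamma> n t *\<^sub>v (?B *\<^sub>v v))"
    by (simp add: assoc_mult_mat_vec[OF T_sg_carrier W_inverse_carrier v])
  also have "\<dots> \<le> sqrt (3 / (mode_decay_rate \<gamma> * t)) * vec_norm (?B *\<^sub>v v)"
    by (rule T_sg_mult_vec_norm_le[OF \<gamma> mult_mat_vec_carrier[OF W_inverse_carrier v] t])
  also have "\<dots> \<le> sqrt (3 / (mode_decay_rate \<gamma> * t)) * (3 * (1 + \<gamma>)\<^sup>2 * vec_norm v)"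
    using W_inverse_mult_vec_norm_le[OF less_imp_le[OF \<gamma>] v] c t by (intro mult_left_mono) simp_all
  also have "\<dots> = 3 * (1 + \<gamma>)\<^sup>2 * sqrt (3 / mode_decay_rate \<gamma>) / sqrt t * vec_norm v"
    using c t by (simp add: real_sqrt_divide real_sqrt_mult)
  finally show ?thesis .
qed

theorem theorem4p8:
  fixes \<gamma> :: real
  assumes "\<gamma> > 0"
  shows "\<exists>M>0. \<forall>n\<ge>1. \<forall>t>0.
           op_norm (T_sg \<gamma> n t * the (mat_inverse (W_mat \<gamma> n))) \<le> M / sqrt t"
proof (intro exI conjI allI impI)
  let ?M = "3 * (1 + \<gamma>)\<^sup>2 * sqrt (3 / mode_decay_rate \<gamma>)"
  have M: "0 < ?M" using assms mode_decay_rate_pos[OF assms] by simp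
  then show "0 < ?M" .
  fix n :: nat and t :: real assume t: "0 < t"
  show "op_norm (T_sg \<gamma> n t * the (mat_inverse (W_mat \<gamma> n))) \<le> ?M / sqrt t"
  proof (rule op_norm_le)
    fix v assume "v \<in> carrier_vec (dim_col (T_sg \<gamma> n t * the (mat_inverse (W_mat \<gamma> n))))"
      and v1: "vec_norm v \<le> 1"
    then have v: "v \<in> carrier_vec (3*n)" using W_inverse_carrier[of \<gamma> n] by simp
    have "vec_norm ((T_sg \<gamma> n t * the (mat_inverse (W_mat \<gamma> n))) *\<^sub>v v) \<le> ?M / sqrt t * vec_norm v"
      by (rule T_sg_W_inverse_mult_vec_norm_le[OF assms t v])
    also have "\<dots> \<le> ?M / sqrt t"
      using v1 M t by (intro mult_left_le) simp_all
    finally show "vec_norm ((T_sg \<gamma> n t * the (mat_inverse (W_mat \<gamma> n))) *\<^sub>v v) \<le> ?M / sqrt t" .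
  qed
qed

end
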